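(* If $F,H\in C^\infty(\mathfrak M)^{\mathrm U(n)}_{\mathcal L}$, then $$\{F,H\}_2=\langle\nabla_1'F,r\nabla_1'H\rangle+\tfrac12\langle\nabla_2F,\nabla_2'H\rangle-\tfrac12\langle\nabla_2H,\nabla_2'F\rangle+\tfrac12\langle\nabla_1F,\nabla_2'H+\nabla_2H\rangle-\tfrac12\langle\nabla_1H,\nabla_2'F+\nabla_2F\rangle,$$ and $\{F,H\}_2\in C^\infty(\mathfrak M)^{\mathrm U(n)}_{\mathcal L}$.
   Context: $G=\mathrm{GL}(n,\mathbb C)$ is regarded as a real Lie group with Lie algebra $\mathcal G=\mathfrak{gl}(n,\mathbb C)$ regarded as a real Lie algebra, equipped with the bilinear form $\langle X,Y\rangle=\Re\operatorname{tr}(XY)$. Every $X\in\mathcal G$ decomposes uniquely as $X=X_>+X_0+X_<$ (strictly upper triangular, diagonal, strictly lower triangular parts). Set $r(X)=\frac12(X_>-X_<)$, $r_\pm=r\pm\frac12\mathrm{id}$. Let $\mathfrak M=G\times\mathcal G=\{(g,J)\}$. For $F\in C^\infty(\mathfrak M,\mathbb R)$ define $\mathcal G$-valued derivatives by $\langle\nabla_1F(g,J),X\rangle=\frac{d}{dt}\big|_{t=0}F(e^{tX}g,J)$, $\langle\nabla_1'F(g,J),X\rangle=\frac{d}{dt}\big|_{t=0}F(ge^{tX},J)$, $\langle d_2F(g,J),X\rangle=\frac{d}{dt}\big|_{t=0}F(g,J+tX)$ for all $X\in\mathcal G$, and $\nabla_2F=J\,d_2F$, $\nabla_2'F=(d_2F)\,J$.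 The Poisson bracket $\{\ ,\ \}_2$ is $\{F,H\}_2=\langle r\nabla_1F,\nabla_1H\rangle-\langle r\nabla_1'F,\nabla_1'H\rangle+\langle \nabla_2F-\nabla_2'F, r_+\nabla_2'H-r_-\nabla_2H\rangle+\langle\nabla_1F, r_+\nabla_2'H-r_-\nabla_2H\rangle-\langle\nabla_1H, r_+\nabla_2'F-r_-\nabla_2F\rangle$. For $\eta\in\mathrm U(n)$ let $\mathcal L_\eta(g,J)=(\eta g,\eta J\eta^{-1})$, and let $C^\infty(\mathfrak M)^{\mathrm U(n)}_{\mathcal L}=\{F\in C^\infty(\mathfrak M,\mathbb R): F\circ\mathcal L_\eta=F\ \forall\eta\in\mathrm U(n)\}$. *)

theory Defs
  imports "HOL-Analysis.Analysis"
begin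

type_synonym 'n cmat = "complex^'n^'n"

fun Ck_on :: "nat \<Rightarrow> 'a::real_normed_vector set \<Rightarrow> ('a \<Rightarrow> 'b::real_normed_vector) \<Rightarrow> bool" where
  "Ck_on 0 S f = continuous_on S f"
| "Ck_on (Suc k) S f =
     ((\<forall>x\<in>S. f differentiable (at x)) \<and>
      (\<forall>v. Ck_on k S (\<lambda>x. frechet_derivative f (at x) v)))"

definition smooth_on_set :: "'a::real_normed_vector set \<Rightarrow> ('a \<Rightarrow> 'b::real_normed_vector) \<Rightarrow> bool" where
  "smooth_on_set S f \<longleftrightarrow> (\<forall>k. Ck_on k S f)"

fun mpow :: "'n::finite cmat \<Rightarrow> nat \<Rightarrow> 'n cmat" where
  "mpow A 0 = mat 1"
| "mpow A (Suc k) = A ** mpow A k"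

definition mexp :: "'n::finite cmat \<Rightarrow> 'n cmat" where
  "mexp A = (\<Sum>k. (1 / fact k) *\<^sub>R mpow A k)"

definition ctrans :: "'n::finite cmat \<Rightarrow> 'n cmat" where
  "ctrans A = (\<chi> i j. cnj (A $ j $ i))"

definition unitary :: "'n::finite cmat \<Rightarrow> bool" where
  "unitary U \<longleftrightarrow> U ** ctrans U = mat 1"

definition ip :: "'n::finite cmat \<Rightarrow> 'n cmat \<Rightarrow> real" where
  "ip X Y = Re (trace (X ** Y))"

definition upper :: "'n::{finite,linorder} cmat \<Rightarrow> 'n cmat" where
  "upper X = (\<chi> i j. if i < j then X $ i $ j else 0)"

definition lower :: "'n::{finite,linorder} cmat \<Rightarrow> 'n cmat" where
  "lower X = (\<chi> i j. if j < i then X $ i $ j else 0)"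

definition rmat :: "'n::{finite,linorder} cmat \<Rightarrow> 'n cmat" where
  "rmat X = (1/2) *\<^sub>R (upper X - lower X)"

definition rplus :: "'n::{finite,linorder} cmat \<Rightarrow> 'n cmat" where
  "rplus X = rmat X + (1/2) *\<^sub>R X"

definition rminus :: "'n::{finite,linorder} cmat \<Rightarrow> 'n cmat" where
  "rminus X = rmat X - (1/2) *\<^sub>R X"

text \<open>The phase space M = GL(n,C) x gl(n,C), as a subset of pairs of matrices.\<close>
definition Mspace :: "('n::finite cmat \<times> 'n cmat) set" where
  "Mspace = {p. invertible (fst p)}"

definition grad1 :: "('n::finite cmat \<times> 'n cmat \<Rightarrow> real) \<Rightarrow> 'n cmat \<Rightarrow> 'n cmat \<Rightarrow> 'n cmat" where
  "grad1 F g J = (THE Z. \<forall>X. ip Z X = deriv (\<lambda>t. F (mexp (t *\<^sub>R X) ** g, J)) 0)"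

definition grad1' :: "('n::finite cmat \<times> 'n cmat \<Rightarrow> real) \<Rightarrow> 'n cmat \<Rightarrow> 'n cmat \<Rightarrow> 'n cmat" where
  "grad1' F g J = (THE Z. \<forall>X. ip Z X = deriv (\<lambda>t. F (g ** mexp (t *\<^sub>R X), J)) 0)"

definition d2 :: "('n::finite cmat \<times> 'n cmat \<Rightarrow> real) \<Rightarrow> 'n cmat \<Rightarrow> 'n cmat \<Rightarrow> 'n cmat" where
  "d2 F g J = (THE Z. \<forall>X. ip Z X = deriv (\<lambda>t. F (g, J + t *\<^sub>R X)) 0)"

definition grad2 :: "('n::finite cmat \<times> 'n cmat \<Rightarrow> real) \<Rightarrow> 'n cmat \<Rightarrow> 'n cmat \<Rightarrow> 'n cmat" where
  "grad2 F g J = J ** d2 F g J"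

definition grad2' :: "('n::finite cmat \<times> 'n cmat \<Rightarrow> real) \<Rightarrow> 'n cmat \<Rightarrow> 'n cmat \<Rightarrow> 'n cmat" where
  "grad2' F g J = d2 F g J ** J"

definition PB2 :: "('n::{finite,linorder} cmat \<times> 'n cmat \<Rightarrow> real) \<Rightarrow> ('n cmat \<times> 'n cmat \<Rightarrow> real)
                   \<Rightarrow> 'n cmat \<times> 'n cmat \<Rightarrow> real" where
  "PB2 F H = (\<lambda>(g, J).
      ip (rmat (grad1 F g J)) (grad1 H g J)
    - ip (rmat (grad1' F g J)) (grad1' H g J)
    + ip (grad2 F g J - grad2' F g J) (rplus (grad2' H g J) - rminus (grad2 H g J))
    + ip (grad1 F g J) (rplus (grad2' H g J) - rminus (grad2 H g J))
    - ip (grad1 H g J) (rplus (grad2' F g J) - rminus (grad2 F g J)))"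

definition inv_smooth :: "('n::finite cmat \<times> 'n cmat \<Rightarrow> real) set" where
  "inv_smooth = {F. smooth_on_set Mspace F \<and>
     (\<forall>\<eta> g J. unitary \<eta> \<longrightarrow> invertible g \<longrightarrow>
        F (\<eta> ** g, \<eta> ** J ** matrix_inv \<eta>) = F (g, J))}"

end

theory Submission
  imports Defs
begin

text \<open>Differentiating the invariance of \<open>F\<close> under \<open>(g, J) \<mapsto> (\<eta> g, \<eta> J \<eta>\<^sup>-\<^sup>1)\<close> along
  unitary curves through the identity shows that \<open>\<nabla>\<^sub>1F + \<nabla>\<^sub>2F - \<nabla>\<^sub>2'F\<close> is Hermitian.
  Since \<open>r\<close> is skew for \<open>\<langle>_, _\<rangle>\<close> and \<open>\<langle>r A, B\<rangle> = 0\<close> for Hermitian \<open>A, B\<close>, all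
  \<open>r\<close>-terms of \<open>{F, H}\<^sub>2\<close> except the one in \<open>\<nabla>\<^sub>1'\<close> cancel, which gives the reduced formula.
  Under \<open>U(n)\<close> the gradient \<open>\<nabla>\<^sub>1'F\<close> is invariant and the other gradients are conjugated,
  so every term of the reduced formula is invariant. Smoothness holds because the gradients
  depend linearly on the first derivative of \<open>F\<close>.\<close>

section \<open>Calculus of \<open>C\<^sup>k\<close> functions\<close>

lemma Ck_on_Suc_imp: "Ck_on (Suc k) S f \<Longrightarrow> Ck_on k S f"
proof (induction k arbitrary: f)
  case 0
  then show ?case
    by (simp add: continuous_at_imp_continuous_on differentiable_imp_continuous_within)
next
  case (Suc k)
  then show ?case by (metis Ck_on.simps(2))
qed

lemma Ck_on_has_derivative:
  "Ck_on (Suc k) S f \<Longrightarrow> x \<in> S \<Longrightarrow> (f has_derivative frechet_derivative f (at x)) (at x)"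
  by (metis Ck_on.simps(2) frechet_derivative_works)

lemma Ck_on_cong:
  assumes "open S" and "\<And>x. x \<in> S \<Longrightarrow> f x = g x" and "Ck_on k S f"
  shows "Ck_on k S g"
  using assms(2,3)
proof (induction k arbitrary: f g)
  case 0
  then show ?case by (metis Ck_on.simps(1) continuous_on_cong)
next
  case (Suc k)
  have "(g has_derivative frechet_derivative f (at x)) (at x)" if "x \<in> S" for x
    using Suc.prems(1)
      has_derivative_transform_within_open[OF Ck_on_has_derivative[OF Suc.prems(2) that] assms(1) that]
    by auto
  then have "g differentiable at x" and "frechet_derivative g (at x) = frechet_derivative f (at x)"
    if "x \<in> S" for x
    using that by (auto simp: differentiable_def frechet_derivative_at[symmetric])
  with Suc show ?case by (auto intro: Suc.IH)
qed

lemma Ck_on_SucI: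
  assumes "open S" and "\<And>x. x \<in> S \<Longrightarrow> (f has_derivative D x) (at x)"
    and "\<And>v. Ck_on k S (\<lambda>x. D x v)"
  shows "Ck_on (Suc k) S f"
proof -
  have "frechet_derivative f (at x) v = D x v" if "x \<in> S" for x v
    using frechet_derivative_at[OF assms(2)[OF that]] by simp
  then show ?thesis
    using assms by (auto simp: differentiable_def intro: Ck_on_cong[OF assms(1)])
qed

lemma Ck_on_const: "Ck_on k S (\<lambda>x. c)"
proof (induction k arbitrary: c)
  case (Suc k)
  have "frechet_derivative (\<lambda>x. c) (at x) = (\<lambda>v. 0)" for x
    by (metis frechet_derivative_at has_derivative_const)
  with Suc show ?case by simp
qed simp

lemma Ck_on_ident: "Ck_on k S (\<lambda>x. x)"
proof (cases k)
  case (Suc k')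
  have "frechet_derivative (\<lambda>x. x) (at x) = (\<lambda>v. v)" for x :: 'a
    by (metis frechet_derivative_at has_derivative_ident)
  with Suc show ?thesis by (simp add: Ck_on_const)
qed (simp add: continuous_on_id)

lemma Ck_on_add:
  assumes "open S" and "Ck_on k S f" and "Ck_on k S g"
  shows "Ck_on k S (\<lambda>x. f x + g x)"
  using assms(2,3)
proof (induction k arbitrary: f g)
  case 0
  then show ?case by (simp add: continuous_on_add)
next
  case (Suc k)
  show ?case
    by (rule Ck_on_SucI[OF assms(1) has_derivative_add[OF Ck_on_has_derivative Ck_on_has_derivative]])
      (use Suc in \<open>auto intro: Suc.IH\<close>)
qed

lemma Ck_on_bounded_linear:
  assumes "open S" and "bounded_linear L" and "Ck_on k S f"
  shows "Ck_on k S (\<lambda>x. L (f x))"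
  using assms(3)
proof (induction k arbitrary: f)
  case 0
  then show ?case using bounded_linear.continuous_on[OF assms(2)] by simp
next
  case (Suc k)
  show ?case
    by (rule Ck_on_SucI[OF assms(1) bounded_linear.has_derivative[OF assms(2) Ck_on_has_derivative]])
      (use Suc in \<open>auto intro: Suc.IH\<close>)
qed

lemma Ck_on_bounded_linear_map: "open S \<Longrightarrow> bounded_linear L \<Longrightarrow> Ck_on k S L"
  using Ck_on_bounded_linear[OF _ _ Ck_on_ident] .

lemma Ck_on_diff:
  assumes "open S" and "Ck_on k S f" and "Ck_on k S g"
  shows "Ck_on k S (\<lambda>x. f x - g x)"
  using Ck_on_add[OF assms(1,2)
      Ck_on_bounded_linear[OF assms(1) bounded_linear_minus[OF bounded_linear_ident] assms(3)]]
  by simp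

lemma Ck_on_bounded_bilinear:
  assumes "open S" and "bounded_bilinear bp" and "Ck_on k S f" and "Ck_on k S g"
  shows "Ck_on k S (\<lambda>x. bp (f x) (g x))"
  using assms(3,4)
proof (induction k arbitrary: f g)
  case 0
  then show ?case using bounded_bilinear.continuous_on[OF assms(2)] by simp
next
  case (Suc k)
  have "Ck_on k S f" "Ck_on k S g"
    using Suc.prems by (auto intro: Ck_on_Suc_imp)
  then show ?case
    by (intro Ck_on_SucI[OF assms(1)
          bounded_bilinear.FDERIV[OF assms(2) Ck_on_has_derivative Ck_on_has_derivative]]
        Ck_on_add[OF assms(1)] Suc.IH) (use Suc.prems in auto)
qed

lemma Ck_on_sum:
  assumes "open S" and "finite A" and "\<And>a. a \<in> A \<Longrightarrow> Ck_on k S (f a)"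
  shows "Ck_on k S (\<lambda>x. \<Sum>a\<in>A. f a x)"
  using assms(2,3)
  by (induction A rule: finite_induct) (auto intro!: Ck_on_add[OF assms(1)] simp: Ck_on_const)

lemma Ck_on_frechet_derivative_apply:
  fixes F :: "'a::euclidean_space \<Rightarrow> 'b::real_normed_vector"
  assumes "open S" and "\<And>k. Ck_on k S F" and "Ck_on k S v"
  shows "Ck_on k S (\<lambda>x. frechet_derivative F (at x) (v x))"
proof (rule Ck_on_cong[OF assms(1)])
  show "Ck_on k S (\<lambda>x. \<Sum>b\<in>Basis. (v x \<bullet> b) *\<^sub>R frechet_derivative F (at x) b)"
    using assms(2)[of "Suc k"]
    by (intro Ck_on_sum[OF assms(1) finite_Basis]
        Ck_on_bounded_bilinear[OF assms(1) bounded_bilinear_scaleR]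
        Ck_on_bounded_linear[OF assms(1) bounded_linear_inner_left assms(3)]) auto
  fix x assume "x \<in> S"
  then have "linear (frechet_derivative F (at x))"
    using Ck_on_has_derivative[OF assms(2)[of "Suc 0"]] has_derivative_linear by blast
  then have "frechet_derivative F (at x) (\<Sum>b\<in>Basis. (v x \<bullet> b) *\<^sub>R b)
      = (\<Sum>b\<in>Basis. (v x \<bullet> b) *\<^sub>R frechet_derivative F (at x) b)"
    by (simp add: linear_sum linear_scale)
  then show "(\<Sum>b\<in>Basis. (v x \<bullet> b) *\<^sub>R frechet_derivative F (at x) b)
      = frechet_derivative F (at x) (v x)"
    by (simp add: euclidean_representation)
qed

interpretation matrix_mult: bounded_bilinear "(**) :: 'n::finite cmat \<Rightarrow> 'n cmat \<Rightarrow> 'n cmat"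
  unfolding bilinear_conv_bounded_bilinear[symmetric] bilinear_def
  by (auto intro!: linearI simp: matrix_add_ldistrib matrix_scalar_ac scalar_matrix_assoc
      matrix_matrix_mult_def vec_eq_iff sum.distrib algebra_simps scaleR_sum_right)

lemmas matrix_mult_distrib =
  matrix_mult.add_left matrix_mult.add_right matrix_mult.diff_left matrix_mult.diff_right
  matrix_mult.minus_left matrix_mult.minus_right matrix_mult.scaleR_left matrix_mult.scaleR_right

lemma ctrans_add: "ctrans (A + B) = ctrans A + ctrans B"
  and ctrans_scaleR: "ctrans (r *\<^sub>R A) = r *\<^sub>R ctrans A"
  and ctrans_ctrans [simp]: "ctrans (ctrans A) = A"
  and ctrans_mat_1 [simp]: "ctrans (mat 1) = mat 1"
  and ctrans_mult: "ctrans (A ** B) = ctrans B ** ctrans A"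
  by (simp_all add: ctrans_def vec_eq_iff mat_def matrix_matrix_mult_def mult.commute)

lemma bounded_linear_ctrans: "bounded_linear (ctrans :: 'n::finite cmat \<Rightarrow> 'n cmat)"
  by (simp add: linear_conv_bounded_linear[symmetric] linearI ctrans_add ctrans_scaleR)

lemma unitary_ctrans_mult_self: "unitary U \<Longrightarrow> ctrans U ** U = mat 1"
  unfolding unitary_def using matrix_left_right_inverse by blast

lemma unitary_invertible: "unitary U \<Longrightarrow> invertible U"
  using unitary_ctrans_mult_self unfolding unitary_def invertible_def by blast

lemma matrix_inv_unitary:
  assumes "unitary U"
  shows "matrix_inv U = ctrans U"
proof -
  have "matrix_inv U ** U = mat 1"
    using unitary_invertible[OF assms] unfolding matrix_inv_def invertible_def
    by (metis (mono_tags, lifting) someI_ex)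
  then have "matrix_inv U ** (U ** ctrans U) = ctrans U"
    by (simp add: matrix_mul_assoc)
  then show ?thesis using assms by (simp add: unitary_def)
qed

definition hermitian :: "'n::finite cmat \<Rightarrow> bool" where
  "hermitian A \<longleftrightarrow> ctrans A = A"

interpretation ip: bounded_bilinear "ip :: 'n::finite cmat \<Rightarrow> 'n cmat \<Rightarrow> real"
  unfolding bilinear_conv_bounded_bilinear[symmetric] bilinear_def ip_def
  by (auto intro!: linearI simp: matrix_mult_distrib trace_def sum.distrib sum_distrib_left)

lemmas ip_distrib =
  ip.add_left ip.add_right ip.diff_left ip.diff_right
  ip.minus_left ip.minus_right ip.scaleR_left ip.scaleR_right

lemma ip_commute: "ip A B = ip B A"
  unfolding ip_def by (subst trace_mul_sym) (rule refl)

lemma ip_mult_left: "ip (A ** B) C = ip B (C ** A)"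
  unfolding ip_def using trace_mul_sym[of A "B ** C"] by (simp add: matrix_mul_assoc)

lemma ip_mult_conj: "ip (J ** A) (J ** B) = ip (A ** J) (B ** J)"
  unfolding ip_def using trace_mul_sym[of J "A ** J ** B"] by (simp add: matrix_mul_assoc)

lemma ip_conj_ctrans: "ip G (ctrans U ** X ** U) = ip (U ** G ** ctrans U) X"
  unfolding ip_def using trace_mul_sym[of U "G ** ctrans U ** X"] by (simp add: matrix_mul_assoc)

lemma ip_unitary_conj:
  assumes "unitary U"
  shows "ip (U ** A ** ctrans U) (U ** B ** ctrans U) = ip A B"
proof -
  have "ctrans U ** (U ** B ** ctrans U) ** U = B"
    by (simp add: matrix_mul_assoc unitary_ctrans_mult_self[OF assms])
      (simp flip: matrix_mul_assoc add: unitary_ctrans_mult_self[OF assms])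
  then show ?thesis
    using ip_conj_ctrans[of A U "U ** B ** ctrans U"] by (simp add: ip_commute)
qed

lemma ip_eq_sum: "ip A B = (\<Sum>i\<in>UNIV. \<Sum>k\<in>UNIV. Re (A$i$k * B$k$i))"
  unfolding ip_def trace_def matrix_matrix_mult_def by (simp add: Re_sum)

lemma ip_eq_inner_ctrans: "ip A B = ctrans A \<bullet> B"
  unfolding ip_eq_sum by (subst sum.swap) (simp add: inner_vec_def ctrans_def inner_complex_def)

lemma ip_left_eqI:
  assumes "\<And>X. ip A X = ip B X"
  shows "A = B"
proof -
  have "(ctrans A - ctrans B) \<bullet> X = 0" for X
    using assms[of X] by (simp add: ip_eq_inner_ctrans inner_diff_left)
  then have "ctrans A - ctrans B = 0"
    using inner_eq_zero_iff by blast
  then show ?thesis by (metis ctrans_ctrans eq_iff_diff_eq_0)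
qed

text \<open>As \<open>ip A B = ctrans A \<bullet> B\<close>, the representative of a linear functional with respect to
  \<open>ip\<close> is the conjugate transpose of its Euclidean gradient.\<close>

definition ip_repr :: "('n::finite cmat \<Rightarrow> real) \<Rightarrow> 'n cmat" where
  "ip_repr L = ctrans (\<Sum>b\<in>Basis. L b *\<^sub>R b)"

lemma ip_ip_repr:
  assumes "linear L"
  shows "ip (ip_repr L) X = L X"
proof -
  have "L X = L (\<Sum>b\<in>Basis. (X \<bullet> b) *\<^sub>R b)" by (simp add: euclidean_representation)
  also have "\<dots> = (\<Sum>b\<in>Basis. L b *\<^sub>R b) \<bullet> X"
    using assms
    by (simp add: linear_sum linear_scale inner_sum_left; intro sum.cong refl; simp add: inner_commute)
  finally show ?thesis unfolding ip_repr_def ip_eq_inner_ctrans by simp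
qed

lemma The_ip_eq_ip_repr:
  assumes "linear L" and "\<And>X. D X = L X"
  shows "(THE Z. \<forall>X. ip Z X = D X) = ip_repr L"
proof (rule the_equality)
  show "\<forall>X. ip (ip_repr L) X = D X"
    by (simp add: ip_ip_repr[OF assms(1)] assms(2))
  show "Z = ip_repr L" if "\<forall>X. ip Z X = D X" for Z
    using that by (intro ip_left_eqI) (simp add: ip_ip_repr[OF assms(1)] assms(2))
qed

lemma rmat_nth:
  "rmat A $ i $ k = (if i < k then A$i$k / 2 else if k < i then - (A$i$k / 2) else 0)"
  by (auto simp: rmat_def upper_def lower_def complex_eq_iff)

lemma rmat_add: "rmat (A + B) = rmat A + rmat B"
  and rmat_diff: "rmat (A - B) = rmat A - rmat B"
  and rmat_scaleR: "rmat (r *\<^sub>R A) = r *\<^sub>R rmat A"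
  by (simp_all add: vec_eq_iff rmat_nth add_divide_distrib diff_divide_distrib scaleR_conv_of_real)

lemma bounded_linear_rmat: "bounded_linear (rmat :: 'n::{finite,linorder} cmat \<Rightarrow> 'n cmat)"
  by (simp add: linear_conv_bounded_linear[symmetric] linearI rmat_add rmat_scaleR)

lemma ip_rmat_left: "ip (rmat A) B = - ip A (rmat B)"
  unfolding ip_eq_sum by (simp add: rmat_nth sum_negf[symmetric]) (auto intro!: sum.cong)

lemma ip_rmat_hermitian:
  assumes "hermitian A" and "hermitian B"
  shows "ip (rmat A) B = 0"
proof -
  define f where "f i k = Re (rmat A $ i $ k * B $ k $ i)" for i k
  have "A$k$i * B$i$k = cnj (A$i$k * B$k$i)" for i k
    using assms unfolding hermitian_def ctrans_def by (simp add: vec_eq_iff)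
  then have Re_eq: "Re (A$k$i * B$i$k) = Re (A$i$k * B$k$i)" for i k
    by (metis cnj.sel(1))
  have f_antisym: "f k i = - f i k" for i k
    unfolding f_def rmat_nth using Re_eq[of i k]
    by (cases "i < k"; cases "k < i") (simp_all add: times_divide_eq_left)
  have "(\<Sum>i\<in>UNIV. \<Sum>k\<in>UNIV. f i k) = (\<Sum>k\<in>UNIV. \<Sum>i\<in>UNIV. f i k)"
    by (rule sum.swap)
  also have "\<dots> = (\<Sum>k\<in>UNIV. \<Sum>i\<in>UNIV. - f k i)"
    by (intro sum.cong refl) (rule f_antisym)
  also have "\<dots> = - (\<Sum>k\<in>UNIV. \<Sum>i\<in>UNIV. f k i)"
    by (simp add: sum_negf)
  finally show ?thesis unfolding ip_eq_sum f_def by simp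
qed

section \<open>The matrix exponential near \<open>0\<close>\<close>

lemma mpow_scaleR: "mpow (t *\<^sub>R X) k = (t ^ k) *\<^sub>R mpow X k"
  by (induction k) (simp_all add: matrix_mult.scaleR_left matrix_mult.scaleR_right)

lemma mexp_zero: "mexp (0 :: 'n::finite cmat) = mat 1"
proof -
  have "(\<lambda>k. (1 / fact k) *\<^sub>R mpow (0 :: 'n cmat) k) = (\<lambda>k. if k = 0 then mat 1 else 0)"
    by (rule ext, case_tac k) simp_all
  then have "(\<lambda>k. (1 / fact k) *\<^sub>R mpow (0 :: 'n cmat) k) sums mat 1"
    using sums_single[of 0 "\<lambda>_. mat 1 :: 'n cmat"] by simp
  then show ?thesis
    unfolding mexp_def by (rule sums_unique[symmetric])
qed

lemma norm_mpow_le: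
  fixes X :: "'n::finite cmat"
  obtains C where "C \<ge> 0" and "\<And>k. norm (mpow X k) \<le> norm (mat 1 :: 'n cmat) * C ^ k"
proof -
  obtain K where K: "K > 0"
    "\<And>A B. norm ((A :: 'n cmat) ** (B :: 'n cmat)) \<le> norm A * norm B * K"
    using matrix_mult.pos_bounded by blast
  have "norm (mpow X k) \<le> norm (mat 1 :: 'n cmat) * (K * norm X) ^ k" for k
  proof (induction k)
    case (Suc k)
    have "norm (mpow X (Suc k)) \<le> norm X * norm (mpow X k) * K"
      using K(2)[of X "mpow X k"] by simp
    also have "\<dots> \<le> norm X * (norm (mat 1 :: 'n cmat) * (K * norm X) ^ k) * K"
      using Suc K(1) by (intro mult_right_mono mult_left_mono) auto
    finally show ?case by (simp add: mult_ac)
  qed simp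
  with K(1) show ?thesis by (intro that[of "K * norm X"]) auto
qed

lemma mexp_scaleR_remainder_le:
  fixes X :: "'n::finite cmat"
  obtains \<delta> B where "\<delta> > 0"
    and "\<And>t. \<bar>t\<bar> < \<delta> \<Longrightarrow> norm (mexp (t *\<^sub>R X) - mat 1 - t *\<^sub>R X) \<le> B * t\<^sup>2"
proof -
  obtain C where C: "C \<ge> 0" "\<And>k. norm (mpow X k) \<le> norm (mat 1 :: 'n cmat) * C ^ k"
    using norm_mpow_le by blast
  define M where "M = norm (mat 1 :: 'n cmat)"
  define a where "a t k = (t ^ k / fact k) *\<^sub>R mpow X k" for t :: real and k
  have norm_a: "norm (a t k) \<le> M * (inverse (fact k) * (\<bar>t\<bar> * C) ^ k)" for t k
  proof -
    have "norm (a t k) = \<bar>t\<bar> ^ k / fact k * norm (mpow X k)"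
      by (simp add: a_def power_abs)
    also have "\<dots> \<le> \<bar>t\<bar> ^ k / fact k * (M * C ^ k)"
      using C(2)[of k] unfolding M_def by (rule mult_left_mono) simp
    finally show ?thesis by (simp add: power_mult_distrib divide_inverse mult_ac)
  qed
  have summable_norm_a: "summable (\<lambda>k. norm (a t k))" for t
    by (rule summable_comparison_test[OF _ summable_mult[OF summable_exp]]) (use norm_a in auto)
  have remainder: "mexp (t *\<^sub>R X) - mat 1 - t *\<^sub>R X = (\<Sum>k. a t (k + 2))" for t
  proof -
    have "mexp (t *\<^sub>R X) = suminf (a t)"
      unfolding mexp_def a_def mpow_scaleR by simp
    also have "\<dots> = (\<Sum>k. a t (k + 2)) + (\<Sum>k<2. a t k)"
      by (rule suminf_split_initial_segment[OF summable_norm_cancel[OF summable_norm_a]])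
    finally show ?thesis by (simp add: a_def numeral_2_eq_2)
  qed
  have "norm (mexp (t *\<^sub>R X) - mat 1 - t *\<^sub>R X) \<le> M * C\<^sup>2 * t\<^sup>2"
    if "\<bar>t\<bar> * C \<le> 1" for t
  proof -
    define e where "e k = inverse (fact k) * (\<bar>t\<bar> * C) ^ k" for k
    have summable_shift: "summable (\<lambda>k. norm (a t (k + 2)))"
      using summable_iff_shift[of "\<lambda>k. norm (a t k)" 2] summable_norm_a[of t] by simp
    have "summable e"
      unfolding e_def[abs_def] by (rule summable_exp)
    then have summable_e_shift: "summable (\<lambda>k. e (k + 2))"
      using summable_iff_shift[of e 2] by blast
    have "norm (\<Sum>k. a t (k + 2)) \<le> (\<Sum>k. norm (a t (k + 2)))"
      by (rule summable_norm[OF summable_shift])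
    also have "\<dots> \<le> (\<Sum>k. M * e (k + 2))"
      by (rule suminf_le[OF _ summable_shift summable_mult[OF summable_e_shift]])
        (unfold e_def, rule norm_a)
    also have "\<dots> = M * (exp (\<bar>t\<bar> * C) - 1 - \<bar>t\<bar> * C)"
      using exp_first_two_terms[of "\<bar>t\<bar> * C"] suminf_mult[OF summable_e_shift, of M]
      by (simp add: e_def)
    also have "\<dots> \<le> M * (\<bar>t\<bar> * C)\<^sup>2"
      using exp_bound[of "\<bar>t\<bar> * C"] that C(1) by (simp add: M_def mult_left_mono)
    finally show ?thesis by (simp add: remainder power_mult_distrib mult_ac)
  qed
  moreover have "\<bar>t\<bar> * C \<le> 1" if "\<bar>t\<bar> < 1 / (C + 1)" for t
  proof -
    have "\<bar>t\<bar> * C \<le> \<bar>t\<bar> * (C + 1)" by (simp add: mult_left_mono)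
    also have "\<dots> < 1" using that C(1) by (simp add: field_simps)
    finally show ?thesis by simp
  qed
  ultimately show ?thesis
    using C(1) by (intro that[of "1 / (C + 1)" "M * C\<^sup>2"]) auto
qed

lemma has_derivative_at_0_of_quadratic_remainder:
  fixes f :: "real \<Rightarrow> 'a::real_normed_vector"
  assumes "\<delta> > 0" and "\<And>t. \<bar>t\<bar> < \<delta> \<Longrightarrow> norm (f t - f 0 - t *\<^sub>R v) \<le> B * t\<^sup>2"
  shows "(f has_derivative (\<lambda>t. t *\<^sub>R v)) (at 0)"
  unfolding has_derivative_at
proof (intro conjI bounded_linear_scaleR_left)
  have "\<forall>\<^sub>F h in at (0::real). \<bar>h\<bar> < \<delta>"
    using eventually_at_ball[OF assms(1), of 0 UNIV]
    by (auto simp: dist_real_def elim!: eventually_mono)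
  then have "\<forall>\<^sub>F h in at 0. norm (norm (f (0 + h) - f 0 - h *\<^sub>R v) / norm h) \<le> B * \<bar>h\<bar>"
  proof (rule eventually_mono)
    fix h :: real assume "\<bar>h\<bar> < \<delta>"
    then have "norm (f h - f 0 - h *\<^sub>R v) \<le> B * \<bar>h\<bar> * \<bar>h\<bar>"
      using assms(2) by (simp add: power2_eq_square abs_mult_self_eq mult.assoc)
    then show "norm (norm (f (0 + h) - f 0 - h *\<^sub>R v) / norm h) \<le> B * \<bar>h\<bar>"
      by (cases "h = 0") (simp_all add: divide_le_eq)
  qed
  moreover have "((\<lambda>h. B * \<bar>h\<bar>) \<longlongrightarrow> 0) (at (0::real))"
    by (intro tendsto_eq_intros) (auto intro: tendsto_ident_at)
  ultimately show "(\<lambda>h. norm (f (0 + h) - f 0 - h *\<^sub>R v) / norm h) \<midarrow>0\<rightarrow> 0"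
    by (rule Lim_null_comparison)
qed

lemma has_derivative_mexp_scaleR: "((\<lambda>t. mexp (t *\<^sub>R X)) has_derivative (\<lambda>t. t *\<^sub>R X)) (at 0)"
proof (rule mexp_scaleR_remainder_le[of X])
  fix \<delta> B assume "\<delta> > 0"
    and "\<And>t. \<bar>t\<bar> < \<delta> \<Longrightarrow> norm (mexp (t *\<^sub>R X) - mat 1 - t *\<^sub>R X) \<le> B * t\<^sup>2"
  then show ?thesis
    by (intro has_derivative_at_0_of_quadratic_remainder[of \<delta>]) (simp_all add: mexp_zero)
qed

section \<open>Gradients as Fr\'echet derivatives\<close>

lemma deriv_comp_at_0:
  fixes F :: "'a::real_normed_vector \<Rightarrow> real"
  assumes "(c has_derivative (\<lambda>t. t *\<^sub>R v)) (at 0)" and "c 0 = x" and "F differentiable at x"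
  shows "deriv (\<lambda>t. F (c t)) 0 = frechet_derivative F (at x) v"
proof -
  have dF: "(F has_derivative frechet_derivative F (at x)) (at (c 0))"
    using assms(2,3) frechet_derivative_works by auto
  have "((\<lambda>t. F (c t)) has_derivative (\<lambda>t. frechet_derivative F (at x) (t *\<^sub>R v))) (at 0)"
    using diff_chain_at[OF assms(1) dF] by (simp add: o_def)
  moreover have
    "(\<lambda>t. frechet_derivative F (at x) (t *\<^sub>R v)) = (*) (frechet_derivative F (at x) v)"
    using linear_scale[OF has_derivative_linear[OF dF]] by (simp add: fun_eq_iff mult.commute)
  ultimately show ?thesis
    by (intro DERIV_imp_deriv) (simp add: has_field_derivative_def)
qed

lemma linear_frechet_derivative_compose:
  assumes "F differentiable at p" and "linear w"
  shows "linear (\<lambda>X. frechet_derivative F (at p) (w X))"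
proof -
  have "linear (frechet_derivative F (at p))"
    using assms(1) frechet_derivative_works has_derivative_linear by blast
  then show ?thesis
    using linear_compose[OF assms(2)] by (simp add: o_def)
qed

lemma The_ip_deriv_eq_ip_repr:
  fixes F :: "'a::real_normed_vector \<Rightarrow> real" and w :: "'n::finite cmat \<Rightarrow> 'a"
  assumes "F differentiable at p" and "linear w"
    and "\<And>X. (c X has_derivative (\<lambda>t. t *\<^sub>R w X)) (at 0)" and "\<And>X. c X 0 = p"
  shows "(THE Z. \<forall>X. ip Z X = deriv (\<lambda>t. F (c X t)) 0)
       = ip_repr (\<lambda>X. frechet_derivative F (at p) (w X))"
  using linear_frechet_derivative_compose[OF assms(1,2)] deriv_comp_at_0[OF assms(3,4,1)]
  by (rule The_ip_eq_ip_repr)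

lemma bounded_linear_mult_left_Pair: "bounded_linear (\<lambda>X :: 'n cmat. (X ** g, 0 :: 'n cmat))"
  for g :: "'n::finite cmat"
  by (rule bounded_linear_Pair[OF matrix_mult.bounded_linear_left bounded_linear_zero])

lemma bounded_linear_mult_right_Pair: "bounded_linear (\<lambda>X :: 'n cmat. (g ** X, 0 :: 'n cmat))"
  for g :: "'n::finite cmat"
  by (rule bounded_linear_Pair[OF matrix_mult.bounded_linear_right bounded_linear_zero])

lemma bounded_linear_Pair_zero: "bounded_linear (\<lambda>X. (0 :: 'n::finite cmat, X :: 'n cmat))"
  by (rule bounded_linear_Pair[OF bounded_linear_zero bounded_linear_ident])

lemma grad1_eq_ip_repr:
  fixes g J :: "'n::finite cmat"
  assumes "F differentiable at (g, J)"
  shows "grad1 F g J = ip_repr (\<lambda>X. frechet_derivative F (at (g, J)) (X ** g, 0))"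
  unfolding grad1_def
proof (rule The_ip_deriv_eq_ip_repr[OF assms
      bounded_linear.linear[OF bounded_linear_mult_left_Pair]])
  show "((\<lambda>t. (mexp (t *\<^sub>R X) ** g, J)) has_derivative (\<lambda>t. t *\<^sub>R (X ** g, 0))) (at 0)" for X
    by (rule has_derivative_eq_rhs[OF has_derivative_Pair[OF bounded_linear.has_derivative[OF
            matrix_mult.bounded_linear_left has_derivative_mexp_scaleR] has_derivative_const]])
      (simp add: fun_eq_iff matrix_mult.scaleR_left)
qed (simp add: mexp_zero)

lemma grad1'_eq_ip_repr:
  fixes g J :: "'n::finite cmat"
  assumes "F differentiable at (g, J)"
  shows "grad1' F g J = ip_repr (\<lambda>X. frechet_derivative F (at (g, J)) (g ** X, 0))"
  unfolding grad1'_def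
proof (rule The_ip_deriv_eq_ip_repr[OF assms
      bounded_linear.linear[OF bounded_linear_mult_right_Pair]])
  show "((\<lambda>t. (g ** mexp (t *\<^sub>R X), J)) has_derivative (\<lambda>t. t *\<^sub>R (g ** X, 0))) (at 0)" for X
    by (rule has_derivative_eq_rhs[OF has_derivative_Pair[OF bounded_linear.has_derivative[OF
            matrix_mult.bounded_linear_right has_derivative_mexp_scaleR] has_derivative_const]])
      (simp add: fun_eq_iff matrix_mult.scaleR_right)
qed (simp add: mexp_zero)

lemma d2_eq_ip_repr:
  fixes g J :: "'n::finite cmat"
  assumes "F differentiable at (g, J)"
  shows "d2 F g J = ip_repr (\<lambda>X. frechet_derivative F (at (g, J)) (0, X))"
  unfolding d2_def
proof (rule The_ip_deriv_eq_ip_repr[OF assms bounded_linear.linear[OF bounded_linear_Pair_zero]])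
  show "((\<lambda>t. (g, J + t *\<^sub>R X)) has_derivative (\<lambda>t. t *\<^sub>R (0, X))) (at 0)" for X
    by (rule has_derivative_eq_rhs[OF has_derivative_Pair[OF has_derivative_const
          has_derivative_add[OF has_derivative_const
            has_derivative_scaleR_left[OF has_derivative_ident]]]])
      simp
qed simp

lemma ip_grad1:
  "F differentiable at (g, J) \<Longrightarrow> ip (grad1 F g J) X = frechet_derivative F (at (g, J)) (X ** g, 0)"
  by (simp add: grad1_eq_ip_repr ip_ip_repr linear_frechet_derivative_compose
      bounded_linear.linear[OF bounded_linear_mult_left_Pair])

lemma ip_grad1':
  "F differentiable at (g, J) \<Longrightarrow> ip (grad1' F g J) X = frechet_derivative F (at (g, J)) (g ** X, 0)"
  by (simp add: grad1'_eq_ip_repr ip_ip_repr linear_frechet_derivative_compose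
      bounded_linear.linear[OF bounded_linear_mult_right_Pair])

lemma ip_d2:
  "F differentiable at (g, J) \<Longrightarrow> ip (d2 F g J) X = frechet_derivative F (at (g, J)) (0, X)"
  by (simp add: d2_eq_ip_repr ip_ip_repr linear_frechet_derivative_compose
      bounded_linear.linear[OF bounded_linear_Pair_zero])

section \<open>Infinitesimal unitary invariance\<close>

definition unitarily_invariant :: "('n::finite cmat \<times> 'n cmat \<Rightarrow> real) \<Rightarrow> bool" where
  "unitarily_invariant F \<longleftrightarrow> (\<forall>\<eta> g J. unitary \<eta> \<longrightarrow> invertible g \<longrightarrow>
     F (\<eta> ** g, \<eta> ** J ** matrix_inv \<eta>) = F (g, J))"

text \<open>For skew-Hermitian \<open>X\<close> with \<open>X\<^sup>3 = -X\<close> this is Rodrigues' formula for \<open>exp (s X)\<close>: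
  a unitary curve with velocity \<open>X\<close> at \<open>0\<close>, obtained without power series.\<close>

definition rodrigues_curve :: "'n::finite cmat \<Rightarrow> real \<Rightarrow> 'n cmat" where
  "rodrigues_curve X s = mat 1 + (1 - cos s) *\<^sub>R (X ** X) + sin s *\<^sub>R X"

lemma rodrigues_curve_unitary:
  fixes X :: "'n::finite cmat"
  assumes skew: "ctrans X = - X" and cube: "X ** X ** X = - X"
  shows "unitary (rodrigues_curve X s)"
proof -
  define Q where "Q = X ** X"
  have XQ: "X ** Q = - X" and QX: "Q ** X = - X"
    using cube by (simp_all add: Q_def matrix_mul_assoc)
  have "Q ** Q = (X ** X ** X) ** X"
    by (simp add: Q_def matrix_mul_assoc)
  then have QQ: "Q ** Q = - Q"
    using cube by (simp add: Q_def matrix_mult.minus_left)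
  define a where "a = 1 - cos s"
  define b where "b = sin s"
  have "ctrans Q = Q"
    using skew by (simp add: Q_def ctrans_mult matrix_mult.minus_left matrix_mult.minus_right)
  then have ct: "ctrans (rodrigues_curve X s) = mat 1 + a *\<^sub>R Q - b *\<^sub>R X"
    unfolding rodrigues_curve_def a_def b_def Q_def[symmetric]
    by (simp add: ctrans_add ctrans_scaleR skew)
  have "rodrigues_curve X s ** ctrans (rodrigues_curve X s)
      = mat 1 + a *\<^sub>R Q + a *\<^sub>R Q - (a * a) *\<^sub>R Q - (b * b) *\<^sub>R Q"
    unfolding ct unfolding rodrigues_curve_def a_def[symmetric] b_def[symmetric] Q_def[symmetric]
    by (simp add: matrix_mult_distrib XQ QX QQ Q_def[symmetric] algebra_simps)
  also have "\<dots> = mat 1 + (a + a - a * a - b * b) *\<^sub>R Q"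
    by (simp only: scaleR_left_distrib scaleR_left_diff_distrib add.assoc diff_conv_add_uminus
        scaleR_minus_left)
  also have "a + a - a * a - b * b = 0"
    using sin_cos_squared_add[of s] by (simp add: a_def b_def power2_eq_square algebra_simps)
  finally show ?thesis by (simp add: unitary_def)
qed

lemma rodrigues_curve_0 [simp]: "rodrigues_curve X 0 = mat 1"
  by (simp add: rodrigues_curve_def)

lemma has_vector_derivative_rodrigues_curve: "(rodrigues_curve X has_vector_derivative X) (at 0)"
proof -
  have "((\<lambda>s. 1 - cos s) has_real_derivative sin 0) (at 0)"
    by (auto intro!: derivative_eq_intros)
  then have "(rodrigues_curve X has_vector_derivative
      0 + ((1 - cos 0) *\<^sub>R 0 + sin 0 *\<^sub>R (X ** X)) + (sin 0 *\<^sub>R 0 + cos 0 *\<^sub>R X)) (at 0)"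
    unfolding rodrigues_curve_def[abs_def]
    by (intro has_vector_derivative_add has_vector_derivative_const has_vector_derivative_scaleR
        DERIV_sin)
  then show ?thesis by simp
qed

lemma frechet_derivative_unitary_orbit:
  fixes X g J :: "'n::finite cmat"
  assumes inv: "unitarily_invariant F" and g: "invertible g" and dF: "F differentiable at (g, J)"
    and skew: "ctrans X = - X" and cube: "X ** X ** X = - X"
  shows "frechet_derivative F (at (g, J)) (X ** g, X ** J - J ** X) = 0"
proof -
  define R where "R = rodrigues_curve X"
  define c where "c s = (R s ** g, R s ** J ** ctrans (R s))" for s
  have "F (c s) = F (g, J)" for s
  proof -
    have "unitary (R s)"
      unfolding R_def by (rule rodrigues_curve_unitary[OF skew cube])
    then show ?thesis
      using inv g unfolding unitarily_invariant_def c_def by (simp add: matrix_inv_unitary)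
  qed
  then have deriv_0: "deriv (\<lambda>s. F (c s)) 0 = 0"
    by simp
  have "(c has_vector_derivative (X ** g, X ** J - J ** X)) (at 0)"
  proof -
    have R': "(R has_vector_derivative X) (at 0)"
      unfolding R_def by (rule has_vector_derivative_rodrigues_curve)
    have "(c has_vector_derivative (X ** g, R 0 ** J ** ctrans X + X ** J ** ctrans (R 0))) (at 0)"
      unfolding c_def
      by (intro has_vector_derivative_Pair
          bounded_linear.has_vector_derivative[OF matrix_mult.bounded_linear_left R']
          matrix_mult.has_vector_derivative
          bounded_linear.has_vector_derivative[OF matrix_mult.bounded_linear_left R']
          bounded_linear.has_vector_derivative[OF bounded_linear_ctrans R'])
    then show ?thesis
      by (simp add: R_def skew matrix_mult.minus_right)
  qed
  moreover have "c 0 = (g, J)"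
    by (simp add: c_def R_def)
  ultimately have
    "deriv (\<lambda>s. F (c s)) 0 = frechet_derivative F (at (g, J)) (X ** g, X ** J - J ** X)"
    using dF unfolding has_vector_derivative_def by (rule deriv_comp_at_0)
  with deriv_0 show ?thesis by simp
qed

lemma ip_grad_combination:
  fixes g J :: "'n::finite cmat"
  assumes "F differentiable at (g, J)"
  shows "ip (grad1 F g J + grad2 F g J - grad2' F g J) X
       = frechet_derivative F (at (g, J)) (X ** g, X ** J - J ** X)"
proof -
  have "ip (grad1 F g J + grad2 F g J - grad2' F g J) X
      = frechet_derivative F (at (g, J)) (X ** g, 0) + frechet_derivative F (at (g, J)) (0, X ** J)
        - frechet_derivative F (at (g, J)) (0, J ** X)"
  proof -
    have "ip (grad2 F g J) X = ip (d2 F g J) (X ** J)"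
      unfolding grad2_def by (rule ip_mult_left)
    moreover have "ip (grad2' F g J) X = ip (d2 F g J) (J ** X)"
      unfolding grad2'_def ip_def by (simp add: matrix_mul_assoc)
    ultimately show ?thesis
      by (simp add: ip.add_left ip.diff_left ip_grad1[OF assms] ip_d2[OF assms])
  qed
  also have "\<dots> = frechet_derivative F (at (g, J)) ((X ** g, 0) + (0, X ** J) - (0, J ** X))"
    using frechet_derivative_works[THEN iffD1, OF assms, THEN has_derivative_linear]
    by (simp only: linear_add linear_diff)
  finally show ?thesis by simp
qed

definition single_entry :: "complex \<Rightarrow> 'n::finite \<Rightarrow> 'n \<Rightarrow> 'n cmat" where
  "single_entry c a b = (\<chi> i j. if i = a \<and> j = b then c else 0)"

lemma single_entry_mult:
  "single_entry c a b ** single_entry d b' e = (if b = b' then single_entry (c * d) a e else 0)"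
proof -
  have "(\<Sum>k\<in>UNIV. (if i = a \<and> k = b then c else 0) * (if k = b' \<and> j = e then d else 0))
      = (if i = a \<and> b = b' \<and> j = e then c * d else 0)" for i j
  proof -
    have "(\<Sum>k\<in>UNIV. (if i = a \<and> k = b then c else 0) * (if k = b' \<and> j = e then d else 0))
        = (\<Sum>k\<in>UNIV. if k = b then (if i = a \<and> b = b' \<and> j = e then c * d else 0) else 0)"
      by (intro sum.cong refl) auto
    then show ?thesis by simp
  qed
  then show ?thesis
    by (auto simp: single_entry_def matrix_matrix_mult_def vec_eq_iff)
qed

lemma ctrans_single_entry: "ctrans (single_entry c a b) = single_entry (cnj c) b a"
  and uminus_single_entry: "- single_entry c a b = single_entry (- c) a b"
  by (auto simp: single_entry_def ctrans_def vec_eq_iff)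

lemma ip_single_entry: "ip u (single_entry c a b) = Re (c * u $ b $ a)"
proof -
  have "ip u (single_entry c a b) = (\<Sum>i\<in>UNIV. if i = b then Re (u $ i $ a * c) else 0)"
    unfolding ip_eq_sum
    by (intro sum.cong refl)
      (auto simp: single_entry_def if_distrib if_distribR sum.delta' cong: if_cong)
  then show ?thesis by (simp add: mult.commute)
qed

lemma single_entry_pair_skew_cube:
  fixes a b :: "'n::finite"
  assumes "a \<noteq> b" and cd: "c * d = - 1" and "cnj d = - c"
  defines "X \<equiv> single_entry c a b + single_entry d b a"
  shows "ctrans X = - X" and "X ** X ** X = - X"
proof -
  have cnj_c: "cnj c = - d"
    using arg_cong[OF assms(3), of cnj] by simp
  have "ctrans X = single_entry (- d) b a + single_entry (- c) a b"
    unfolding X_def by (simp add: ctrans_add ctrans_single_entry cnj_c assms(3))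
  then show "ctrans X = - X"
    unfolding X_def by (simp add: uminus_single_entry add.commute)
  have "X ** X = single_entry (c * d) a a + single_entry (c * d) b b"
    unfolding X_def using assms(1)
    by (simp add: matrix_mult_distrib single_entry_mult mult.commute)
  then show "X ** X ** X = - X"
    unfolding X_def using assms(1)
    by (simp add: matrix_mult_distrib single_entry_mult uminus_single_entry cd)
qed

text \<open>Testing against the skew-Hermitian matrices \<open>i E\<^sub>a\<^sub>a\<close>, \<open>E\<^sub>a\<^sub>b - E\<^sub>b\<^sub>a\<close> and
  \<open>i (E\<^sub>a\<^sub>b + E\<^sub>b\<^sub>a)\<close>, all of which satisfy \<open>X\<^sup>3 = -X\<close>, detects the Hermitian matrices.\<close>

lemma hermitian_if_ip_skew_vanishes:
  fixes u :: "'n::finite cmat"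
  assumes "\<And>X. ctrans X = - X \<Longrightarrow> X ** X ** X = - X \<Longrightarrow> ip u X = 0"
  shows "hermitian u"
proof -
  have "cnj (u $ b $ a) = u $ a $ b" for a b
  proof (cases "a = b")
    case True
    have "ip u (single_entry \<i> a a) = 0"
      by (rule assms) (simp_all add: ctrans_single_entry uminus_single_entry single_entry_mult)
    with True show ?thesis by (simp add: ip_single_entry complex_eq_iff)
  next
    case False
    have "ip u (single_entry 1 a b + single_entry (- 1) b a) = 0"
      using single_entry_pair_skew_cube[OF False, of 1 "- 1"] by (intro assms) simp_all
    moreover have "ip u (single_entry \<i> a b + single_entry \<i> b a) = 0"
      using single_entry_pair_skew_cube[OF False, of \<i> \<i>] by (intro assms) simp_all
    ultimately show ?thesis by (simp add: ip.add_right ip_single_entry complex_eq_iff)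
  qed
  then show ?thesis by (simp add: hermitian_def ctrans_def vec_eq_iff)
qed

lemma hermitian_grad_combination:
  fixes g J :: "'n::finite cmat"
  assumes "unitarily_invariant F" and "invertible g" and "F differentiable at (g, J)"
  shows "hermitian (grad1 F g J + grad2 F g J - grad2' F g J)"
  using frechet_derivative_unitary_orbit[OF assms]
  by (intro hermitian_if_ip_skew_vanishes) (simp add: ip_grad_combination[OF assms(3)])

section \<open>The reduced form of the bracket\<close>

text \<open>With \<open>a = \<nabla>\<^sub>1, a' = \<nabla>\<^sub>1', p = \<nabla>\<^sub>2, q = \<nabla>\<^sub>2'\<close>: the \<open>r\<close>-terms involving
  \<open>a\<^sub>1, p\<^sub>1, q\<^sub>1\<close> collect into \<open>\<langle>r(a\<^sub>1 + p\<^sub>1 - q\<^sub>1), a\<^sub>2 + p\<^sub>2 - q\<^sub>2\<rangle>\<close>,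
  which vanishes because both arguments are Hermitian.\<close>

lemma bracket_reduction_identity:
  fixes a1 a1' p1 q1 a2 a2' p2 q2 :: "'n::{finite,linorder} cmat"
  assumes "hermitian (a1 + p1 - q1)" and "hermitian (a2 + p2 - q2)" and "ip p1 p2 = ip q1 q2"
  shows "ip (rmat a1) a2 - ip (rmat a1') a2' + ip (p1 - q1) (rplus q2 - rminus p2)
       + ip a1 (rplus q2 - rminus p2) - ip a2 (rplus q1 - rminus p1)
     = ip a1' (rmat a2') + 1/2 * ip p1 q2 - 1/2 * ip p2 q1
       + 1/2 * ip a1 (q2 + p2) - 1/2 * ip a2 (q1 + p1)"
proof -
  have rmat_swap: "ip (rmat X) Y = - ip (rmat Y) X" for X Y :: "'n cmat"
    using ip_rmat_left[of X Y] ip_commute[of X "rmat Y"] by simp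
  have rmat_right: "ip X (rmat Y) = - ip (rmat X) Y" for X Y :: "'n cmat"
    using ip_rmat_left[of X Y] by simp
  show ?thesis
    using ip_rmat_hermitian[OF assms(1,2)] rmat_swap[of a2 q1] rmat_swap[of a2 p1]
      ip_commute[of q1 p2] assms(3)
    by (simp add: ip_distrib rmat_add rmat_diff rmat_scaleR rmat_right rplus_def rminus_def)
      (simp only: diff_divide_distrib add_divide_distrib)
qed

lemma PB2_eq_reduced:
  fixes g J :: "'n::{finite,linorder} cmat"
  assumes "unitarily_invariant F" and "unitarily_invariant H" and "invertible g"
    and "F differentiable at (g, J)" and "H differentiable at (g, J)"
  shows "PB2 F H (g, J) =
                ip (grad1' F g J) (rmat (grad1' H g J))
              + (1/2) * ip (grad2 F g J) (grad2' H g J)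
              - (1/2) * ip (grad2 H g J) (grad2' F g J)
              + (1/2) * ip (grad1 F g J) (grad2' H g J + grad2 H g J)
              - (1/2) * ip (grad1 H g J) (grad2' F g J + grad2 F g J)"
  unfolding PB2_def prod.case
  by (rule bracket_reduction_identity[OF hermitian_grad_combination[OF assms(1,3,4)]
        hermitian_grad_combination[OF assms(2,3,5)]])
    (simp add: grad2_def grad2'_def ip_mult_conj)

section \<open>Unitary invariance of the bracket\<close>

lemma open_Mspace: "open (Mspace :: ('n::finite cmat \<times> 'n cmat) set)"
proof -
  have "(Mspace :: ('n cmat \<times> 'n cmat) set) = fst -` {A. det A \<noteq> 0}"
    by (auto simp: Mspace_def invertible_det_nz)
  moreover have "open {A :: 'n cmat. det A \<noteq> 0}"
    by (rule open_Collect_neq) (auto simp: det_def intro!: continuous_intros)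
  ultimately show ?thesis
    by (metis open_vimage_fst)
qed

lemma frechet_derivative_unitary_conj:
  fixes g J U A B :: "'n::finite cmat"
  assumes inv: "unitarily_invariant F" and diff: "\<And>x. x \<in> Mspace \<Longrightarrow> F differentiable at x"
    and U: "unitary U" and g: "invertible g"
  shows "frechet_derivative F (at (U ** g, U ** J ** ctrans U)) (U ** A, U ** B ** ctrans U)
       = frechet_derivative F (at (g, J)) (A, B)"
proof -
  define T where "T p = (U ** fst p, U ** snd p ** ctrans U)" for p :: "'n cmat \<times> 'n cmat"
  have "bounded_linear T"
    unfolding T_def
    by (intro bounded_linear_Pair
        bounded_linear_compose[OF matrix_mult.bounded_linear_right bounded_linear_fst]
        bounded_linear_compose[OF matrix_mult.bounded_linear_left]
        bounded_linear_compose[OF matrix_mult.bounded_linear_right bounded_linear_snd])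
  then have T': "(T has_derivative T) (at (g, J))"
    by (rule bounded_linear_imp_has_derivative)
  have "T (g, J) \<in> Mspace"
    using g unitary_invertible[OF U] by (simp add: T_def Mspace_def invertible_mult)
  then have F': "(F has_derivative frechet_derivative F (at (T (g, J)))) (at (T (g, J)))"
    using diff frechet_derivative_works by blast
  have invariant: "F x = (F \<circ> T) x" if "x \<in> Mspace" for x
  proof -
    obtain g' J' where x: "x = (g', J')" by fastforce
    with that have "invertible g'" by (simp add: Mspace_def)
    with inv U have "F (U ** g', U ** J' ** matrix_inv U) = F (g', J')"
      unfolding unitarily_invariant_def by blast
    then show ?thesis by (simp add: T_def x matrix_inv_unitary[OF U])
  qed
  have "(F has_derivative frechet_derivative F (at (T (g, J))) \<circ> T) (at (g, J))"
    using g by (intro has_derivative_transform_within_open[OF diff_chain_at[OF T' F'] open_Mspace])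
      (simp_all add: Mspace_def invariant)
  then have "frechet_derivative F (at (g, J)) = frechet_derivative F (at (T (g, J))) \<circ> T"
    by (rule frechet_derivative_at[symmetric])
  then show ?thesis by (simp add: T_def)
qed

context
  fixes F :: "'n::finite cmat \<times> 'n cmat \<Rightarrow> real" and g J U :: "'n cmat"
  assumes inv: "unitarily_invariant F" and diff: "\<And>x. x \<in> Mspace \<Longrightarrow> F differentiable at x"
    and U: "unitary U" and g: "invertible g"
begin

private lemma diff_at: "F differentiable at (g, J)"
  and diff_at_conj: "F differentiable at (U ** g, U ** J ** ctrans U)"
  using diff g unitary_invertible[OF U] by (simp_all add: Mspace_def invertible_mult)

private lemma unitary_cancel: "U ** ctrans U = mat 1" "ctrans U ** U = mat 1"
    "X ** U ** ctrans U = X" "X ** ctrans U ** U = X"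
  using U by (simp_all add: unitary_def unitary_ctrans_mult_self flip: matrix_mul_assoc)

private lemma frechet_conj: "frechet_derivative F (at (U ** g, U ** J ** ctrans U)) (A, B)
    = frechet_derivative F (at (g, J)) (ctrans U ** A, ctrans U ** B ** U)"
proof -
  have "(A, B) = (U ** (ctrans U ** A), U ** (ctrans U ** B ** U) ** ctrans U)"
    by (simp add: matrix_mul_assoc unitary_cancel)
  then show ?thesis
    using frechet_derivative_unitary_conj[OF inv diff U g] by metis
qed

lemma grad1_unitary_conj: "grad1 F (U ** g) (U ** J ** ctrans U) = U ** grad1 F g J ** ctrans U"
proof (rule ip_left_eqI)
  fix X
  have "ip (grad1 F (U ** g) (U ** J ** ctrans U)) X
      = frechet_derivative F (at (g, J)) ((ctrans U ** X ** U) ** g, 0)"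
    by (simp add: ip_grad1 diff_at_conj frechet_conj matrix_mul_assoc)
  also have "\<dots> = ip (U ** grad1 F g J ** ctrans U) X"
    by (simp add: ip_grad1 diff_at ip_conj_ctrans[symmetric])
  finally show "ip (grad1 F (U ** g) (U ** J ** ctrans U)) X
      = ip (U ** grad1 F g J ** ctrans U) X" .
qed

lemma grad1'_unitary_conj: "grad1' F (U ** g) (U ** J ** ctrans U) = grad1' F g J"
  by (rule ip_left_eqI)
    (simp add: ip_grad1' diff_at diff_at_conj frechet_conj matrix_mul_assoc unitary_cancel)

lemma d2_unitary_conj: "d2 F (U ** g) (U ** J ** ctrans U) = U ** d2 F g J ** ctrans U"
proof (rule ip_left_eqI)
  fix X
  have "ip (d2 F (U ** g) (U ** J ** ctrans U)) X
      = frechet_derivative F (at (g, J)) (0, ctrans U ** X ** U)"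
    by (simp add: ip_d2 diff_at_conj frechet_conj)
  also have "\<dots> = ip (U ** d2 F g J ** ctrans U) X"
    by (simp add: ip_d2 diff_at ip_conj_ctrans[symmetric])
  finally show "ip (d2 F (U ** g) (U ** J ** ctrans U)) X
      = ip (U ** d2 F g J ** ctrans U) X" .
qed

lemma grad2_unitary_conj: "grad2 F (U ** g) (U ** J ** ctrans U) = U ** grad2 F g J ** ctrans U"
  and grad2'_unitary_conj:
    "grad2' F (U ** g) (U ** J ** ctrans U) = U ** grad2' F g J ** ctrans U"
  unfolding grad2_def grad2'_def d2_unitary_conj
  by (simp_all add: matrix_mul_assoc unitary_cancel)

end

lemma PB2_unitary_invariant:
  fixes g J U :: "'n::{finite,linorder} cmat"
  assumes "unitarily_invariant F" and "unitarily_invariant H"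
    and "\<And>x. x \<in> Mspace \<Longrightarrow> F differentiable at x"
    and "\<And>x. x \<in> Mspace \<Longrightarrow> H differentiable at x"
    and U: "unitary U" and g: "invertible g"
  shows "PB2 F H (U ** g, U ** J ** matrix_inv U) = PB2 F H (g, J)"
proof -
  have Ug: "invertible (U ** g)"
    using g unitary_invertible[OF U] by (simp add: invertible_mult)
  then have M: "(g, J) \<in> Mspace" "(U ** g, U ** J ** ctrans U) \<in> Mspace"
    using g by (simp_all add: Mspace_def)
  note reduced = PB2_eq_reduced[OF assms(1,2) g assms(3,4)[OF M(1)]]
    and reduced_conj = PB2_eq_reduced[OF assms(1,2) Ug assms(3,4)[OF M(2)]]
  have conj_add: "U ** A ** ctrans U + U ** B ** ctrans U = U ** (A + B) ** ctrans U"
    for A B :: "'n cmat"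
    by (simp add: matrix_mult_distrib)
  have "PB2 F H (U ** g, U ** J ** ctrans U) = PB2 F H (g, J)"
    by (simp only: reduced reduced_conj
      grad1_unitary_conj[OF assms(1,3) U g] grad1'_unitary_conj[OF assms(1,3) U g]
      grad2_unitary_conj[OF assms(1,3) U g] grad2'_unitary_conj[OF assms(1,3) U g]
      grad1_unitary_conj[OF assms(2,4) U g] grad1'_unitary_conj[OF assms(2,4) U g]
      grad2_unitary_conj[OF assms(2,4) U g] grad2'_unitary_conj[OF assms(2,4) U g]
      conj_add ip_unitary_conj[OF U])
  then show ?thesis by (simp add: matrix_inv_unitary[OF U])
qed

section \<open>Smoothness of the bracket\<close>

lemma Ck_on_ip_repr_frechet_derivative:
  fixes F :: "'a::euclidean_space \<Rightarrow> real" and w :: "'n::finite cmat \<Rightarrow> 'a \<Rightarrow> 'a"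
  assumes "open S" and "\<And>k. Ck_on k S F" and "\<And>X. Ck_on k S (w X)"
  shows "Ck_on k S (\<lambda>x. ip_repr (\<lambda>X. frechet_derivative F (at x) (w X x)))"
  unfolding ip_repr_def
  by (intro Ck_on_bounded_linear[OF assms(1) bounded_linear_ctrans]
      Ck_on_sum[OF assms(1) finite_Basis] Ck_on_bounded_bilinear[OF assms(1) bounded_bilinear_scaleR]
      Ck_on_frechet_derivative_apply[OF assms] Ck_on_const)

context
  fixes F :: "'n::finite cmat \<times> 'n cmat \<Rightarrow> real"
  assumes smooth: "\<And>k. Ck_on k Mspace F"
begin

private lemma differentiable_on_Mspace: "x \<in> Mspace \<Longrightarrow> F differentiable at x"
  using smooth[of "Suc 0"] by simp

lemma Ck_on_grad1: "Ck_on k Mspace (\<lambda>x. grad1 F (fst x) (snd x))"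
proof (rule Ck_on_cong[OF open_Mspace _
      Ck_on_ip_repr_frechet_derivative[OF open_Mspace smooth]])
  show "Ck_on k Mspace (\<lambda>x. (X ** fst x, 0 :: 'n cmat))" for X :: "'n cmat"
    by (intro Ck_on_bounded_linear_map open_Mspace bounded_linear_Pair bounded_linear_zero
        bounded_linear_compose[OF matrix_mult.bounded_linear_right bounded_linear_fst])
  show "ip_repr (\<lambda>X. frechet_derivative F (at x) (X ** fst x, 0))
      = grad1 F (fst x) (snd x)"
    if "x \<in> Mspace" for x
    using grad1_eq_ip_repr[of F "fst x" "snd x"] differentiable_on_Mspace[OF that] by simp
qed

lemma Ck_on_grad1': "Ck_on k Mspace (\<lambda>x. grad1' F (fst x) (snd x))"
proof (rule Ck_on_cong[OF open_Mspace _
      Ck_on_ip_repr_frechet_derivative[OF open_Mspace smooth]])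
  show "Ck_on k Mspace (\<lambda>x. (fst x ** X, 0 :: 'n cmat))" for X :: "'n cmat"
    by (intro Ck_on_bounded_linear_map open_Mspace bounded_linear_Pair bounded_linear_zero
        bounded_linear_compose[OF matrix_mult.bounded_linear_left bounded_linear_fst])
  show "ip_repr (\<lambda>X. frechet_derivative F (at x) (fst x ** X, 0))
      = grad1' F (fst x) (snd x)"
    if "x \<in> Mspace" for x
    using grad1'_eq_ip_repr[of F "fst x" "snd x"] differentiable_on_Mspace[OF that] by simp
qed

lemma Ck_on_d2: "Ck_on k Mspace (\<lambda>x. d2 F (fst x) (snd x))"
proof (rule Ck_on_cong[OF open_Mspace _
      Ck_on_ip_repr_frechet_derivative[OF open_Mspace smooth Ck_on_const]])
  show "ip_repr (\<lambda>X. frechet_derivative F (at x) (0, X)) = d2 F (fst x) (snd x)"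
    if "x \<in> Mspace" for x
    using d2_eq_ip_repr[of F "fst x" "snd x"] differentiable_on_Mspace[OF that] by simp
qed

lemma Ck_on_grad2: "Ck_on k Mspace (\<lambda>x. grad2 F (fst x) (snd x))"
  and Ck_on_grad2': "Ck_on k Mspace (\<lambda>x. grad2' F (fst x) (snd x))"
  unfolding grad2_def grad2'_def
  by (intro Ck_on_bounded_bilinear[OF open_Mspace matrix_mult.bounded_bilinear_axioms] Ck_on_d2
      Ck_on_bounded_linear_map[OF open_Mspace bounded_linear_snd])+

end

lemma Ck_on_PB2:
  fixes F H :: "'n::{finite,linorder} cmat \<times> 'n cmat \<Rightarrow> real"
  assumes "\<And>k. Ck_on k Mspace F" and "\<And>k. Ck_on k Mspace H"
  shows "Ck_on k Mspace (PB2 F H)"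
proof -
  note Ck_on_ops = Ck_on_add[OF open_Mspace] Ck_on_diff[OF open_Mspace]
    Ck_on_bounded_bilinear[OF open_Mspace ip.bounded_bilinear_axioms]
    Ck_on_bounded_linear[OF open_Mspace bounded_linear_rmat]
    Ck_on_bounded_linear[OF open_Mspace bounded_linear_scaleR_right]
  have "PB2 F H = (\<lambda>x. PB2 F H (fst x, snd x))" by simp
  then show ?thesis
    unfolding PB2_def prod.case rplus_def rminus_def
    by (simp only:)
      (intro Ck_on_ops Ck_on_grad1 Ck_on_grad1' Ck_on_grad2 Ck_on_grad2' assms)
qed

lemma inv_smooth_iff: "F \<in> inv_smooth \<longleftrightarrow> (\<forall>k. Ck_on k Mspace F) \<and> unitarily_invariant F"
  by (simp add: inv_smooth_def smooth_on_set_def unitarily_invariant_def)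

theorem lemma3p2:
  fixes F H :: "'n::{finite,linorder} cmat \<times> 'n cmat \<Rightarrow> real"
  assumes "F \<in> inv_smooth" and "H \<in> inv_smooth"
  shows "(\<forall>g J. invertible g \<longrightarrow>
            PB2 F H (g, J) =
                ip (grad1' F g J) (rmat (grad1' H g J))
              + (1/2) * ip (grad2 F g J) (grad2' H g J)
              - (1/2) * ip (grad2 H g J) (grad2' F g J)
              + (1/2) * ip (grad1 F g J) (grad2' H g J + grad2 H g J)
              - (1/2) * ip (grad1 H g J) (grad2' F g J + grad2 F g J))
         \<and> PB2 F H \<in> inv_smooth"
proof -
  have smooth: "\<And>k. Ck_on k Mspace F" "\<And>k. Ck_on k Mspace H"
    and inv: "unitarily_invariant F" "unitarily_invariant H"
    using assms by (simp_all add: inv_smooth_iff)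
  have diff: "\<And>x. x \<in> Mspace \<Longrightarrow> F differentiable at x"
    "\<And>x. x \<in> Mspace \<Longrightarrow> H differentiable at x"
    using smooth(1)[of "Suc 0"] smooth(2)[of "Suc 0"] by simp_all
  show ?thesis
    unfolding inv_smooth_iff unitarily_invariant_def
    using PB2_eq_reduced[OF inv] PB2_unitary_invariant[OF inv diff] Ck_on_PB2[OF smooth] diff
    by (simp add: Mspace_def)
qed

end
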